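(* Let $K$ be a field and let $S$ be a semigroup with presentation $sgp\langle X\mid R\rangle$ (so $R\subseteq X^\dagger\times X^\dagger$ and the natural morphism $X^\dagger\to S$ induces an isomorphism from $X^\dagger$ modulo the congruence generated by $R$ onto $S$). Let $P:=\{l-r : (l,r)\in R\}\subseteq K[X^\dagger]$, let $Q\subseteq K[X^\dagger]$, and let $Q'$ be the image of $Q$ under the natural morphism $K[X^\dagger]\to K[S]$. Define the mixed set $F$ with tagged part $\dashv\! Q=\{\dashv\! q : q\in Q\}$ and untagged part $P$. Then there is a bijection of sets $$\frac{K[S]}{\langle Q'\rangle^r}\;\cong\;\frac{K[\dashv\! X^\dagger]}{\stackrel{*}{\leftrightarrow}_F},$$ where $\langle Q'\rangle^r$ is the right ideal of the semigroup algebra $K[S]$ generated by $Q'$ and $K[S]/\langle Q'\rangle^r$ is the set of classes of $K[S]$ under $a\sim b\iff a-b\in\langle Q'\rangle^r$.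
   Context: $K[S]$ is the semigroup algebra of $S$ over $K$. $X^\dagger$ is the free semigroup of nonempty words on $X$, $X^*$ the free monoid (empty word $id$), and $K[X^\dagger]$ the free noncommutative $K$-algebra. A semigroup well-ordering $>$ on $X^\dagger$ is fixed: a well-ordering with $m_1>m_2 \Rightarrow um_1v>um_2v$ for all $u,v\in X^*$. For a nonzero polynomial, $\mathtt{LT}$ is its largest term w.r.t. $>$ and $\mathtt{LC}$ its coefficient. Tagged polynomials: $\dashv$ is a symbol; $K[\dashv\! X^\dagger]$ is the $K$-vector space with basis the tagged terms $\dashv\! m$ ($m\in X^\dagger$), a right $K[X^\dagger]$-module via $(\dashv\! m)w=\dashv\!(mw)$. For $p=\sum k_im_i\in K[X^\dagger]$ and $w\in X^*$, $\dashv\! w\,p:=\sum k_i\dashv\!(wm_i)$ and $\dashv\! p:=\dashv\! id\,p$. Tagged terms are ordered by $\dashv\! m_1>\dashv\! m_2\iff m_1>m_2$. Reduction: for a mixed set $F=(F_T,F_P)$, $F_T\subseteq K[\dashv\! X^\dagger]$ (tagged part), $F_P\subseteq K[X^\dagger]$ (untagged part), zero elements ignored, the relation $\to_F$ on $K[\dashv\! X^\dagger]$ is: $f\to_F f-\frac{k}{\mathtt{LC}(f_i)}f_iv$ if $f_i\in F_T$, $v\in X^*$ and $\mathtt{LT}(f_i)v$ occurs in $f$ with coefficient $k\neq0$; and $f\to_F f-\frac{k}{\mathtt{LC}(f_i)}\dashv\! w\,f_i\,v$ if $f_i\in F_P$, $w,v\in X^*$ and $\dashv\!(w\,\mathtt{LT}(f_i)\,v)$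 occurs in $f$ with coefficient $k\neq0$. (The paper normalizes all polynomials to be monic.) $\stackrel{*}{\leftrightarrow}_F$ is the reflexive, symmetric, transitive closure of $\to_F$. *)

theory Defs
  imports Main "HOL-Library.Function_Algebras"
begin

text \<open>Words over the alphabet 'x are lists; X-dagger = nonempty lists, X-star = all lists
  (the empty list is the empty word id).  Polynomials in K[X-dagger] and tagged polynomials
  in K[tag X-dagger] are both represented by their coefficient functions on words, finitely
  supported on nonempty words (the tag map is the identity on coefficient functions).\<close>

definition fin_poly :: "('x list \<Rightarrow> 'k::zero) set" where
  "fin_poly = {f. finite {m. f m \<noteq> 0} \<and> f [] = 0}"

definition semigroup_wellorder :: "('x list \<Rightarrow> 'x list \<Rightarrow> bool) \<Rightarrow> bool" where
  "semigroup_wellorder gt \<longleftrightarrow>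
     (\<forall>a b. gt a b \<longrightarrow> a \<noteq> [] \<and> b \<noteq> []) \<and>
     (\<forall>a b c. gt a b \<longrightarrow> gt b c \<longrightarrow> gt a c) \<and>
     (\<forall>a b. a \<noteq> [] \<longrightarrow> b \<noteq> [] \<longrightarrow> gt a b \<or> a = b \<or> gt b a) \<and>
     wf {(b, a). gt a b} \<and>
     (\<forall>m1 m2 u v. gt m1 m2 \<longrightarrow> gt (u @ m1 @ v) (u @ m2 @ v))"

definition LT :: "('x list \<Rightarrow> 'x list \<Rightarrow> bool) \<Rightarrow> ('x list \<Rightarrow> 'k::zero) \<Rightarrow> 'x list" where
  "LT gt f = (THE m. f m \<noteq> 0 \<and> (\<forall>m'. f m' \<noteq> 0 \<and> m' \<noteq> m \<longrightarrow> gt m m'))"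

definition LC :: "('x list \<Rightarrow> 'x list \<Rightarrow> bool) \<Rightarrow> ('x list \<Rightarrow> 'k::zero) \<Rightarrow> 'k" where
  "LC gt f = f (LT gt f)"

text \<open>w p v : the polynomial sum k_i (w m_i v); for tagged polynomials this is
  tag w p v, and with w = [] it is the right module action f v.\<close>
definition wrap :: "'x list \<Rightarrow> ('x list \<Rightarrow> 'k::zero) \<Rightarrow> 'x list \<Rightarrow> 'x list \<Rightarrow> 'k" where
  "wrap w p v = (\<lambda>m. if \<exists>u. m = w @ u @ v then p (THE u. m = w @ u @ v) else 0)"

definition scal :: "'k::times \<Rightarrow> ('a \<Rightarrow> 'k) \<Rightarrow> 'a \<Rightarrow> 'k" where
  "scal c f = (\<lambda>m. c * f m)"

text \<open>One-step reduction w.r.t. the mixed set F = (FT, FP); zero elements ignored.\<close>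
definition red :: "('x list \<Rightarrow> 'x list \<Rightarrow> bool) \<Rightarrow> ('x list \<Rightarrow> 'k::field) set \<Rightarrow>
    ('x list \<Rightarrow> 'k) set \<Rightarrow> (('x list \<Rightarrow> 'k) \<times> ('x list \<Rightarrow> 'k)) set" where
  "red gt FT FP = {(f, g).
     (\<exists>fi\<in>FT. fi \<noteq> 0 \<and> (\<exists>v. f (LT gt fi @ v) \<noteq> 0 \<and>
        g = f - scal (f (LT gt fi @ v) / LC gt fi) (wrap [] fi v))) \<or>
     (\<exists>fi\<in>FP. fi \<noteq> 0 \<and> (\<exists>w v. f (w @ LT gt fi @ v) \<noteq> 0 \<and>
        g = f - scal (f (w @ LT gt fi @ v) / LC gt fi) (wrap w fi v)))}"

definition red_equiv :: "('x list \<Rightarrow> 'x list \<Rightarrow> bool) \<Rightarrow> ('x list \<Rightarrow> 'k::field) set \<Rightarrow>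
    ('x list \<Rightarrow> 'k) set \<Rightarrow> (('x list \<Rightarrow> 'k) \<times> ('x list \<Rightarrow> 'k)) set" where
  "red_equiv gt FT FP = {(f, g). f \<in> fin_poly \<and> g \<in> fin_poly \<and>
      (f, g) \<in> (red gt FT FP \<union> (red gt FT FP)\<inverse>)\<^sup>*}"

definition cong_step :: "('x list \<times> 'x list) set \<Rightarrow> ('x list \<times> 'x list) set" where
  "cong_step R = {(u @ l @ v, u @ r @ v) | u l r v. (l, r) \<in> R}"

definition cong_gen :: "('x list \<times> 'x list) set \<Rightarrow> ('x list \<times> 'x list) set" where
  "cong_gen R = (cong_step R \<union> (cong_step R)\<inverse>)\<^sup>*"

definition sg_alg :: "('s \<Rightarrow> 'k::zero) set" where
  "sg_alg = {a. finite {s. a s \<noteq> 0}}"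

definition sg_mult :: "('s::semigroup_mult \<Rightarrow> 'k::comm_ring_1) \<Rightarrow> ('s \<Rightarrow> 'k) \<Rightarrow> 's \<Rightarrow> 'k" where
  "sg_mult a b = (\<lambda>s. \<Sum>(s1, s2)\<in>{(s1, s2). a s1 \<noteq> 0 \<and> b s2 \<noteq> 0 \<and> s1 * s2 = s}. a s1 * b s2)"

definition alg_map :: "('x list \<Rightarrow> 's) \<Rightarrow> ('x list \<Rightarrow> 'k::comm_ring_1) \<Rightarrow> 's \<Rightarrow> 'k" where
  "alg_map \<phi> p = (\<lambda>s. \<Sum>m\<in>{m. p m \<noteq> 0 \<and> \<phi> m = s}. p m)"

inductive_set right_ideal :: "('s::semigroup_mult \<Rightarrow> 'k::field) set \<Rightarrow> ('s \<Rightarrow> 'k) set"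
  for G where
  gen: "g \<in> G \<Longrightarrow> g \<in> right_ideal G"
| zero: "0 \<in> right_ideal G"
| add: "a \<in> right_ideal G \<Longrightarrow> b \<in> right_ideal G \<Longrightarrow> a + b \<in> right_ideal G"
| smult: "a \<in> right_ideal G \<Longrightarrow> scal c a \<in> right_ideal G"
| rmult: "a \<in> right_ideal G \<Longrightarrow> b \<in> sg_alg \<Longrightarrow> sg_mult a b \<in> right_ideal G"

definition word_monom :: "'x list \<Rightarrow> 'x list \<Rightarrow> 'k::zero_neq_one" where
  "word_monom m = (\<lambda>m'. if m' = m then 1 else 0)"

end

theory Submission
  imports Defs "HOL.Modules"
begin

text \<open>
  Identify \<open>K[\<stileturn>X\<^sup>\<dagger>]\<close> with \<open>K[X\<^sup>\<dagger>]\<close> through the tag. A reduction step subtracts a multiple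
  of a generator \<open>f v\<close> (\<open>f \<in> Q\<close>) or \<open>w p v\<close> (\<open>p \<in> P\<close>). Conversely, any multiple \<open>c b\<close> of such a
  generator can be added within \<open>\<leftrightarrow>\<^sup>*\<^sub>F\<close>: at the term of \<open>b\<close> coming from the leading term of
  \<open>f\<close> or \<open>p\<close>, both \<open>h\<close> and \<open>h + c b\<close> reduce to the same polynomial. Hence \<open>f \<leftrightarrow>\<^sup>*\<^sub>F g\<close> iff
  \<open>f - g\<close> lies in the span \<open>J\<close> of these generators. The natural map \<open>\<pi> : K[X\<^sup>\<dagger>] \<rightarrow> K[S]\<close> is
  onto, maps \<open>J\<close> onto the right ideal \<open>\<langle>Q'\<rangle>\<^sup>r\<close>, and its kernel is spanned by the two-sided
  multiples of \<open>P\<close> because \<open>S\<close> is presented by \<open>R\<close>. So \<open>f \<leftrightarrow>\<^sup>*\<^sub>F g\<close> iff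
  \<open>\<pi> f - \<pi> g \<in> \<langle>Q'\<rangle>\<^sup>r\<close>, and \<open>\<pi>\<close> induces the required bijection of the quotients.
\<close>

lemma bij_betw_quotient_pullback:
  assumes onto: "F ` A = B" and s: "s \<subseteq> B \<times> B"
    and r: "r = {(x, y). x \<in> A \<and> y \<in> A \<and> (F x, F y) \<in> s}"
  shows "\<exists>h. bij_betw h (B // s) (A // r)"
proof -
  define h where "h X = {x \<in> A. F x \<in> X}" for X
  have h_class: "h (s `` {F x}) = r `` {x}" if "x \<in> A" for x
    using that unfolding h_def r by auto
  have "X = F ` h X" if "X \<in> B // s" for X
    using that s onto unfolding quotient_def h_def by auto
  then have "inj_on h (B // s)"
    by (metis inj_onI)
  moreover have "h ` (B // s) = A // r"
    using onto h_class unfolding quotient_def by auto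
  ultimately show ?thesis
    unfolding bij_betw_def by blast
qed

section \<open>Finitely supported functions\<close>

abbreviation supp :: "('a \<Rightarrow> 'k::zero) \<Rightarrow> 'a set" where
  "supp f \<equiv> {x. f x \<noteq> 0}"

definition sg_basis :: "'s \<Rightarrow> 's \<Rightarrow> 'k::zero_neq_one" where
  "sg_basis t = (\<lambda>s. if s = t then 1 else 0)"

lemma word_monom_eq_sg_basis: "word_monom = sg_basis"
  by (simp add: word_monom_def sg_basis_def fun_eq_iff)

global_interpretation scal: module "scal :: 'k::field \<Rightarrow> ('a \<Rightarrow> 'k) \<Rightarrow> 'a \<Rightarrow> 'k"
  by unfold_locales (simp_all add: scal_def fun_eq_iff algebra_simps)

lemma subspace_finite_support: "scal.subspace {f :: 'a \<Rightarrow> 'k::field. finite (supp f)}"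
proof (rule scal.subspaceI)
  show "f + g \<in> {f. finite (supp f)}" if "f \<in> {f. finite (supp f)}" "g \<in> {f. finite (supp f)}"
    for f g :: "'a \<Rightarrow> 'k"
  proof -
    have "supp (f + g) \<subseteq> supp f \<union> supp g"
      by auto
    then show ?thesis
      using that finite_subset by fastforce
  qed
  show "scal c f \<in> {f. finite (supp f)}" if "f \<in> {f. finite (supp f)}" for c and f :: "'a \<Rightarrow> 'k"
  proof -
    have "supp (scal c f) \<subseteq> supp f"
      by (auto simp: scal_def)
    then show ?thesis
      using that finite_subset by fastforce
  qed
qed simp

lemma subspace_sg_alg: "scal.subspace (sg_alg :: ('s \<Rightarrow> 'k::field) set)"
  unfolding sg_alg_def by (rule subspace_finite_support)

lemma subspace_fin_poly: "scal.subspace (fin_poly :: ('x list \<Rightarrow> 'k::field) set)"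
proof -
  have "scal.subspace {p :: 'x list \<Rightarrow> 'k. p [] = 0}"
    by (rule scal.subspaceI) (simp_all add: scal_def)
  moreover have "fin_poly = {p. finite (supp p)} \<inter> {p :: 'x list \<Rightarrow> 'k. p [] = 0}"
    by (auto simp: fin_poly_def)
  ultimately show ?thesis
    using scal.subspace_inter subspace_finite_support by metis
qed

lemma sg_basis_in_sg_alg: "sg_basis t \<in> sg_alg"
  by (simp add: sg_alg_def sg_basis_def)

lemma word_monom_in_fin_poly: "m \<noteq> [] \<Longrightarrow> word_monom m \<in> fin_poly"
  by (simp add: fin_poly_def word_monom_def)

lemma finite_support_induct [consumes 1, case_names zero add]:
  fixes f :: "'a \<Rightarrow> 'k::field"
  assumes fin: "finite (supp f)"
    and zero: "P 0"
    and add: "\<And>g x. supp g \<subseteq> supp f \<Longrightarrow> x \<in> supp f \<Longrightarrow> P g \<Longrightarrow> P (g + scal (f x) (sg_basis x))"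
  shows "P f"
proof -
  have restrict: "finite A \<Longrightarrow> A \<subseteq> supp f \<Longrightarrow> P (\<lambda>y. if y \<in> A then f y else 0)" for A
  proof (induction A rule: finite_induct)
    case empty
    show ?case using zero by (simp add: zero_fun_def)
  next
    case (insert x A)
    have "(\<lambda>y. if y \<in> insert x A then f y else 0)
        = (\<lambda>y. if y \<in> A then f y else 0) + scal (f x) (sg_basis x)"
      using insert by (auto simp: fun_eq_iff sg_basis_def scal_def)
    moreover have "supp (\<lambda>y. if y \<in> A then f y else 0) \<subseteq> supp f"
      by auto
    ultimately show ?case using insert add by simp
  qed
  have "P (\<lambda>y. if y \<in> supp f then f y else 0)"
    using restrict[OF fin] by blast
  moreover have "(\<lambda>y. if y \<in> supp f then f y else 0) = f"
    by auto
  ultimately show ?thesis by simp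
qed

section \<open>Multiplying polynomials by words on both sides\<close>

lemma wrap_apply [simp]: "wrap w p v (w @ u @ v) = p u"
  by (simp add: wrap_def)

lemma wrap_Nil_apply [simp]: "wrap [] p v (u @ v) = p u"
  by (simp add: wrap_def)

lemma wrap_eq_zero: "(\<And>u. m \<noteq> w @ u @ v) \<Longrightarrow> wrap w p v m = 0"
  by (simp add: wrap_def)

lemma supp_wrap: "supp (wrap w p v) \<subseteq> (\<lambda>u. w @ u @ v) ` supp p"
  by (auto simp: wrap_def)

lemma wrap_Nil_Nil [simp]: "wrap [] p [] = p"
proof
  fix m
  show "wrap [] p [] m = p m"
    using wrap_Nil_apply[where p=p and u=m and v="[]"] by (simp only: append_Nil2)
qed

lemma wrap_in_fin_poly:
  assumes "p \<in> fin_poly"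
  shows "wrap w p v \<in> fin_poly"
proof -
  have "finite (supp (wrap w p v))"
    by (rule finite_subset[OF supp_wrap]) (use assms in \<open>simp add: fin_poly_def\<close>)
  moreover have "wrap w p v [] = 0"
    using assms by (cases "w = [] \<and> v = []") (auto simp: fin_poly_def intro: wrap_eq_zero)
  ultimately show ?thesis
    by (simp add: fin_poly_def)
qed

lemma wrap_Nil_wrap: "wrap [] (wrap w p v') v = wrap w p (v' @ v)"
proof
  fix m
  show "wrap [] (wrap w p v') v m = wrap w p (v' @ v) m"
  proof (cases "\<exists>u. m = w @ u @ v' @ v")
    case True
    then obtain u where "m = w @ u @ v' @ v"
      by blast
    then show ?thesis
      using wrap_Nil_apply[where p="wrap w p v'" and u="w @ u @ v'" and v=v]
        wrap_apply[where w=w and p=p and u=u and v=v']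
        wrap_apply[where w=w and p=p and u=u and v="v' @ v"]
      by (simp only: append_assoc)
  next
    case False
    have "wrap [] (wrap w p v') v m = 0"
    proof (cases "\<exists>u. m = u @ v")
      case True
      then obtain u where m: "m = u @ v"
        by blast
      have "wrap w p v' u = 0"
        using False m by (intro wrap_eq_zero) auto
      then show ?thesis
        using m by simp
    next
      case False
      then show ?thesis
        by (intro wrap_eq_zero) auto
    qed
    moreover have "wrap w p (v' @ v) m = 0"
      using False by (intro wrap_eq_zero) auto
    ultimately show ?thesis
      by simp
  qed
qed

lemma module_hom_wrap: "module_hom scal scal (\<lambda>p. wrap w p v)"
  by unfold_locales (simp_all add: wrap_def scal_def fun_eq_iff algebra_simps)

lemma wrap_word_monom: "wrap w (word_monom m) v = word_monom (w @ m @ v)"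
proof
  fix m'
  show "wrap w (word_monom m) v m' = word_monom (w @ m @ v) m'"
    by (cases "\<exists>u. m' = w @ u @ v") (auto simp: word_monom_def intro: wrap_eq_zero split: if_splits)
qed

section \<open>Leading coefficients\<close>

lemma semigroup_wellorderD:
  assumes "semigroup_wellorder gt"
  shows semigroup_wellorder_trans: "gt a b \<Longrightarrow> gt b c \<Longrightarrow> gt a c"
    and semigroup_wellorder_total: "a \<noteq> [] \<Longrightarrow> b \<noteq> [] \<Longrightarrow> gt a b \<or> a = b \<or> gt b a"
    and semigroup_wellorder_asym: "gt a b \<Longrightarrow> \<not> gt b a"
proof -
  note wo = assms[unfolded semigroup_wellorder_def, THEN conjunct2]
  show "gt a b \<Longrightarrow> gt b c \<Longrightarrow> gt a c"
    using wo[THEN conjunct1] by blast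
  show "a \<noteq> [] \<Longrightarrow> b \<noteq> [] \<Longrightarrow> gt a b \<or> a = b \<or> gt b a"
    using wo[THEN conjunct2, THEN conjunct1] by blast
  show "gt a b \<Longrightarrow> \<not> gt b a"
    using wo[THEN conjunct2, THEN conjunct2, THEN conjunct1] wf_not_sym[of "{(b, a). gt a b}" b a]
    by simp
qed

lemma semigroup_wellorder_finite_max:
  assumes gt: "semigroup_wellorder gt" and "finite S" "S \<noteq> {}" "[] \<notin> S"
  shows "\<exists>m\<in>S. \<forall>m'\<in>S. m' \<noteq> m \<longrightarrow> gt m m'"
  using assms(2-4)
proof (induction S rule: finite_ne_induct)
  case (singleton x)
  then show ?case by simp
next
  case (insert x S)
  then obtain m where m: "m \<in> S" "\<forall>m'\<in>S. m' \<noteq> m \<longrightarrow> gt m m'"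
    by auto
  have "gt x m \<or> gt m x"
    using semigroup_wellorder_total[OF gt, of x m] insert.hyps insert.prems m(1) by auto
  then show ?case
  proof
    assume xm: "gt x m"
    have "gt x m'" if "m' \<in> insert x S" "m' \<noteq> x" for m'
    proof (cases "m' = m")
      case True
      with xm show ?thesis by simp
    next
      case False
      with that m have "gt m m'" by simp
      with xm show ?thesis by (rule semigroup_wellorder_trans[OF gt])
    qed
    then show ?case by blast
  next
    assume "gt m x"
    then show ?case using m by blast
  qed
qed

lemma LC_nonzero:
  assumes gt: "semigroup_wellorder gt" and p: "p \<in> fin_poly" "p \<noteq> 0"
  shows "LC gt p \<noteq> 0"
proof -
  have "\<exists>m\<in>supp p. \<forall>m'\<in>supp p. m' \<noteq> m \<longrightarrow> gt m m'"
    by (rule semigroup_wellorder_finite_max[OF gt]) (use p in \<open>auto simp: fin_poly_def fun_eq_iff\<close>)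
  then obtain m where m: "p m \<noteq> 0" "\<And>m'. p m' \<noteq> 0 \<Longrightarrow> m' \<noteq> m \<Longrightarrow> gt m m'"
    by blast
  have "LT gt p = m"
    unfolding LT_def
  proof (rule the_equality)
    show "p m \<noteq> 0 \<and> (\<forall>m'. p m' \<noteq> 0 \<and> m' \<noteq> m \<longrightarrow> gt m m')"
      using m by blast
  next
    fix m2
    assume m2: "p m2 \<noteq> 0 \<and> (\<forall>m'. p m' \<noteq> 0 \<and> m' \<noteq> m2 \<longrightarrow> gt m2 m')"
    show "m2 = m"
    proof (rule ccontr)
      assume "m2 \<noteq> m"
      then have "gt m2 m" "gt m m2"
        using m m2 by auto
      then show False
        using semigroup_wellorder_asym[OF gt] by blast
    qed
  qed
  then show ?thesis
    using m by (simp add: LC_def)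
qed

section \<open>Reduction modulo a mixed set\<close>

lemma conversion_diff_in_subspace:
  assumes S: "scal.subspace S"
    and step_diff: "\<And>x y. (x, y) \<in> r \<Longrightarrow> F x - F y \<in> S"
    and conv: "(a, b) \<in> (r \<union> r\<inverse>)\<^sup>*"
  shows "F a - F b \<in> S"
  using conv
proof (induction rule: rtrancl_induct)
  case base
  show ?case
    using scal.subspace_0[OF S] by (simp only: diff_self)
next
  case (step y z)
  have "F y - F z \<in> S"
    using step.hyps(2)
  proof
    assume "(y, z) \<in> r\<inverse>"
    then have "- (F z - F y) \<in> S"
      using scal.subspace_neg[OF S step_diff] by blast
    then show ?thesis
      by (simp only: minus_diff_eq)
  qed (rule step_diff)
  then have "(F a - F y) + (F y - F z) \<in> S"
    by (rule scal.subspace_add[OF S step.IH])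
  moreover have "(F a - F y) + (F y - F z) = F a - F z"
    by (simp add: algebra_simps)
  ultimately show ?case
    by (simp only:)
qed

definition mixed_gens :: "('x list \<Rightarrow> 'k::zero) set \<Rightarrow> ('x list \<Rightarrow> 'k) set \<Rightarrow> ('x list \<Rightarrow> 'k) set"
  where "mixed_gens FT FP = {wrap [] f v | f v. f \<in> FT} \<union> {wrap w p v | w p v. p \<in> FP}"

abbreviation mixed_ideal ::
    "('x list \<Rightarrow> 'k::field) set \<Rightarrow> ('x list \<Rightarrow> 'k) set \<Rightarrow> ('x list \<Rightarrow> 'k) set"
  where "mixed_ideal FT FP \<equiv> scal.span (mixed_gens FT FP)"

lemma mixed_gens_iff:
  "b \<in> mixed_gens FT FP \<longleftrightarrow> (\<exists>w p v. b = wrap w p v \<and> (p \<in> FT \<and> w = [] \<or> p \<in> FP))"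
  unfolding mixed_gens_def by blast

lemma mixed_ideal_mono:
  "FT \<subseteq> FT' \<Longrightarrow> FP \<subseteq> FP' \<Longrightarrow> mixed_ideal FT FP \<subseteq> mixed_ideal FT' FP'"
  unfolding mixed_gens_def by (intro scal.span_mono) blast

lemma mixed_ideal_subset_fin_poly:
  assumes "FT \<subseteq> fin_poly" "FP \<subseteq> fin_poly"
  shows "mixed_ideal FT FP \<subseteq> fin_poly"
proof (rule scal.span_minimal[OF _ subspace_fin_poly])
  show "mixed_gens FT FP \<subseteq> fin_poly"
    unfolding mixed_gens_def using assms wrap_in_fin_poly by blast
qed

lemma wrap_Nil_in_mixed_ideal:
  assumes "l \<in> mixed_ideal FT FP"
  shows "wrap [] l v \<in> mixed_ideal FT FP"
proof -
  have "wrap [] b v \<in> mixed_gens FT FP" if b: "b \<in> mixed_gens FT FP" for b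
  proof -
    obtain w p u where "b = wrap w p u" "p \<in> FT \<and> w = [] \<or> p \<in> FP"
      using b unfolding mixed_gens_iff by blast
    then have "wrap [] b v = wrap w p (u @ v) \<and> (p \<in> FT \<and> w = [] \<or> p \<in> FP)"
      by (simp add: wrap_Nil_wrap)
    then show ?thesis
      unfolding mixed_gens_iff by blast
  qed
  then have "scal.span ((\<lambda>l. wrap [] l v) ` mixed_gens FT FP) \<subseteq> mixed_ideal FT FP"
    by (intro scal.span_mono) blast
  then show ?thesis
    using assms module_hom.span_image[OF module_hom_wrap] by blast
qed

lemma red_tagged_step:
  "fi \<in> FT \<Longrightarrow> fi \<noteq> 0 \<Longrightarrow> h (LT gt fi @ v) \<noteq> 0 \<Longrightarrow>
    (h, h - scal (h (LT gt fi @ v) / LC gt fi) (wrap [] fi v)) \<in> red gt FT FP"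
  unfolding red_def by blast

lemma red_untagged_step:
  "fi \<in> FP \<Longrightarrow> fi \<noteq> 0 \<Longrightarrow> h (w @ LT gt fi @ v) \<noteq> 0 \<Longrightarrow>
    (h, h - scal (h (w @ LT gt fi @ v) / LC gt fi) (wrap w fi v)) \<in> red gt FT FP"
  unfolding red_def by blast

lemma red_diff_in_mixed_ideal:
  assumes "(f, g) \<in> red gt FT FP"
  shows "f - g \<in> mixed_ideal FT FP"
proof -
  obtain c b where "b \<in> mixed_gens FT FP" "g = f - scal c b"
    using assms unfolding red_def mixed_gens_def by blast
  then show ?thesis
    by (simp add: scal.span_base scal.span_scale)
qed

text \<open>Both \<open>h\<close> and \<open>h + c b\<close> reduce at \<open>t\<close> to \<open>h - (h t / b t) b\<close> (or already equal it).\<close>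

lemma conversion_add_scal:
  fixes b :: "'a \<Rightarrow> 'k::field"
  assumes bt: "b t \<noteq> 0"
    and reduces: "\<And>h. h t \<noteq> 0 \<Longrightarrow> (h, h - scal (h t / b t) b) \<in> Red"
  shows "(h, h + scal c b) \<in> (Red \<union> Red\<inverse>)\<^sup>*"
proof -
  have to_normal: "(g, g - scal (g t / b t) b) \<in> (Red \<union> Red\<inverse>)\<^sup>*" for g
    using reduces[of g] by (cases "g t = 0") auto
  have "h + scal c b - scal ((h + scal c b) t / b t) b = h - scal (h t / b t) b"
    using bt by (simp add: fun_eq_iff field_simps scal_def)
  then have "(h - scal (h t / b t) b, h + scal c b) \<in> (Red \<union> Red\<inverse>)\<^sup>*"
    using to_normal[of "h + scal c b"] symD[OF sym_rtrancl[OF sym_Un_converse]] by metis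
  with to_normal[of h] show ?thesis
    by (rule rtrancl_trans)
qed

lemma mixed_gen_conversion:
  assumes gt: "semigroup_wellorder gt" and fin: "FT \<subseteq> fin_poly" "FP \<subseteq> fin_poly"
    and b: "b \<in> mixed_gens FT FP"
  shows "(h, h + scal c b) \<in> (red gt FT FP \<union> (red gt FT FP)\<inverse>)\<^sup>*"
proof -
  obtain w fi v where b_eq: "b = wrap w fi v" and fi: "fi \<in> FT \<and> w = [] \<or> fi \<in> FP"
    using b unfolding mixed_gens_iff by blast
  show ?thesis
  proof (cases "fi = 0")
    case True
    then show ?thesis
      by (simp add: b_eq module_hom.zero[OF module_hom_wrap])
  next
    case False
    let ?t = "w @ LT gt fi @ v"
    have "b ?t = LC gt fi"
      by (simp add: b_eq LC_def)
    moreover have "LC gt fi \<noteq> 0"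
      using LC_nonzero[OF gt _ False] fi fin by blast
    ultimately have "b ?t \<noteq> 0"
      by simp
    then show ?thesis
    proof (rule conversion_add_scal)
      fix h' :: "'a list \<Rightarrow> 'b"
      assume "h' ?t \<noteq> 0"
      with fi False show "(h', h' - scal (h' ?t / b ?t) b) \<in> red gt FT FP"
        unfolding \<open>b ?t = LC gt fi\<close> b_eq
        using red_tagged_step[where h=h' and v=v] red_untagged_step[where h=h' and w=w and v=v]
        by (auto simp: LC_def)
    qed
  qed
qed

lemma conversion_iff_mixed_ideal:
  assumes gt: "semigroup_wellorder gt" and fin: "FT \<subseteq> fin_poly" "FP \<subseteq> fin_poly"
  shows "(f, g) \<in> (red gt FT FP \<union> (red gt FT FP)\<inverse>)\<^sup>* \<longleftrightarrow> f - g \<in> mixed_ideal FT FP"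
proof
  assume "(f, g) \<in> (red gt FT FP \<union> (red gt FT FP)\<inverse>)\<^sup>*"
  then show "f - g \<in> mixed_ideal FT FP"
    by (rule conversion_diff_in_subspace[where F = "\<lambda>x. x", OF scal.subspace_span, rotated])
      (rule red_diff_in_mixed_ideal)
next
  have add: "(h, h + d) \<in> (red gt FT FP \<union> (red gt FT FP)\<inverse>)\<^sup>*"
    if "d \<in> mixed_ideal FT FP" for d h
    using that
  proof (induction arbitrary: h rule: scal.span_induct_alt)
    case base
    then show ?case by simp
  next
    case (step c b d)
    have "(h, h + scal c b) \<in> (red gt FT FP \<union> (red gt FT FP)\<inverse>)\<^sup>*"
      using mixed_gen_conversion[OF gt fin step.hyps(1)] .
    moreover have "(h + scal c b, h + scal c b + d) \<in> (red gt FT FP \<union> (red gt FT FP)\<inverse>)\<^sup>*"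
      using step.IH .
    ultimately have "(h, h + scal c b + d) \<in> (red gt FT FP \<union> (red gt FT FP)\<inverse>)\<^sup>*"
      by (rule rtrancl_trans)
    then show ?case
      by (simp only: add.assoc)
  qed
  assume "f - g \<in> mixed_ideal FT FP"
  then have "- (f - g) \<in> mixed_ideal FT FP"
    by (rule scal.span_neg)
  from add[OF this, of f] show "(f, g) \<in> (red gt FT FP \<union> (red gt FT FP)\<inverse>)\<^sup>*"
    by simp
qed

lemma red_equiv_eq_mixed_ideal:
  assumes "semigroup_wellorder gt" "FT \<subseteq> fin_poly" "FP \<subseteq> fin_poly"
  shows "red_equiv gt FT FP = {(f, g). f \<in> fin_poly \<and> g \<in> fin_poly \<and> f - g \<in> mixed_ideal FT FP}"
  using conversion_iff_mixed_ideal[OF assms] by (auto simp: red_equiv_def)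

section \<open>The natural map into the semigroup algebra\<close>

lemma sg_mult_eq_sum:
  fixes a b :: "'s::semigroup_mult \<Rightarrow> 'k::comm_ring_1"
  assumes "finite A" "finite B" "supp a \<subseteq> A" "supp b \<subseteq> B"
  shows "sg_mult a b s = (\<Sum>(x, y)\<in>{(x, y). x \<in> A \<and> y \<in> B \<and> x * y = s}. a x * b y)"
  unfolding sg_mult_def
proof (rule sum.mono_neutral_left)
  show "finite {(x, y). x \<in> A \<and> y \<in> B \<and> x * y = s}"
    by (rule finite_subset[of _ "A \<times> B"]) (use assms(1,2) in auto)
qed (use assms(3,4) in auto)

lemma sg_mult_add_right:
  fixes a b c :: "'s::semigroup_mult \<Rightarrow> 'k::comm_ring_1"
  assumes "a \<in> sg_alg" "b \<in> sg_alg" "c \<in> sg_alg"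
  shows "sg_mult a (b + c) = sg_mult a b + sg_mult a c"
proof
  fix s
  let ?S = "{(x, y). x \<in> supp a \<and> y \<in> supp b \<union> supp c \<and> x * y = s}"
  have fin: "finite (supp a)" "finite (supp b \<union> supp c)"
    using assms by (auto simp: sg_alg_def)
  have "sg_mult a (b + c) s = (\<Sum>(x, y)\<in>?S. a x * (b + c) y)"
    by (rule sg_mult_eq_sum[OF fin]) auto
  also have "\<dots> = (\<Sum>(x, y)\<in>?S. a x * b y) + (\<Sum>(x, y)\<in>?S. a x * c y)"
    by (simp add: sum.distrib[symmetric] case_prod_beta distrib_left)
  also have "\<dots> = sg_mult a b s + sg_mult a c s"
    using sg_mult_eq_sum[OF fin, of a b s] sg_mult_eq_sum[OF fin, of a c s] by auto
  finally show "sg_mult a (b + c) s = (sg_mult a b + sg_mult a c) s"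
    by simp
qed

lemma sg_mult_scal_right:
  fixes a b :: "'s::semigroup_mult \<Rightarrow> 'k::comm_ring_1"
  assumes "a \<in> sg_alg" "b \<in> sg_alg"
  shows "sg_mult a (scal c b) = scal c (sg_mult a b)"
proof
  fix s
  let ?S = "{(x, y). x \<in> supp a \<and> y \<in> supp b \<and> x * y = s}"
  have fin: "finite (supp a)" "finite (supp b)"
    using assms by (auto simp: sg_alg_def)
  have "sg_mult a (scal c b) s = (\<Sum>(x, y)\<in>?S. a x * scal c b y)"
    by (rule sg_mult_eq_sum[OF fin]) (auto simp: scal_def)
  also have "\<dots> = c * (\<Sum>(x, y)\<in>?S. a x * b y)"
    by (simp add: sum_distrib_left case_prod_beta scal_def algebra_simps)
  also have "\<dots> = scal c (sg_mult a b) s"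
    using sg_mult_eq_sum[OF fin, of a b s] by (simp add: scal_def)
  finally show "sg_mult a (scal c b) s = scal c (sg_mult a b) s" .
qed

lemma sg_mult_add_basis_right:
  fixes a g :: "'s::semigroup_mult \<Rightarrow> 'k::field"
  assumes "a \<in> sg_alg" "g \<in> sg_alg"
  shows "sg_mult a (g + scal c (sg_basis x)) = sg_mult a g + scal c (sg_mult a (sg_basis x))"
proof -
  have "scal c (sg_basis x) \<in> sg_alg"
    using sg_basis_in_sg_alg by (rule scal.subspace_scale[OF subspace_sg_alg])
  then show ?thesis
    using assms by (simp add: sg_mult_add_right sg_mult_scal_right sg_basis_in_sg_alg)
qed

lemma sg_mult_zero_right: "sg_mult a 0 = 0"
  by (simp add: sg_mult_def fun_eq_iff)

lemma alg_map_eq_sum: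
  "finite A \<Longrightarrow> supp p \<subseteq> A \<Longrightarrow> alg_map \<phi> p s = sum p {m \<in> A. \<phi> m = s}"
  unfolding alg_map_def by (rule sum.mono_neutral_left) auto

lemma supp_alg_map: "supp (alg_map \<phi> p) \<subseteq> \<phi> ` supp p"
proof -
  have "alg_map \<phi> p s = 0" if "s \<notin> \<phi> ` supp p" for s
    unfolding alg_map_def by (rule sum.neutral) (use that in auto)
  then show ?thesis
    by blast
qed

lemma alg_map_in_sg_alg: "p \<in> fin_poly \<Longrightarrow> alg_map \<phi> p \<in> sg_alg"
  using supp_alg_map finite_subset by (fastforce simp: sg_alg_def fin_poly_def)

lemma alg_map_zero: "alg_map \<phi> 0 = 0"
  by (simp add: alg_map_def fun_eq_iff)

lemma alg_map_add:
  assumes "p \<in> fin_poly" "q \<in> fin_poly"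
  shows "alg_map \<phi> (p + q) = alg_map \<phi> p + alg_map \<phi> q"
proof
  fix s
  let ?A = "supp p \<union> supp q"
  have fin: "finite ?A"
    using assms by (simp add: fin_poly_def)
  have "alg_map \<phi> (p + q) s = sum (p + q) {m \<in> ?A. \<phi> m = s}"
    by (rule alg_map_eq_sum[OF fin]) auto
  also have "\<dots> = alg_map \<phi> p s + alg_map \<phi> q s"
    using alg_map_eq_sum[OF fin, of p \<phi> s] alg_map_eq_sum[OF fin, of q \<phi> s]
    by (simp add: sum.distrib)
  finally show "alg_map \<phi> (p + q) s = (alg_map \<phi> p + alg_map \<phi> q) s"
    by simp
qed

lemma alg_map_scal:
  assumes "p \<in> fin_poly"
  shows "alg_map \<phi> (scal c p) = scal c (alg_map \<phi> p)"
proof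
  fix s
  have fin: "finite (supp p)"
    using assms by (simp add: fin_poly_def)
  have "alg_map \<phi> (scal c p) s = sum (scal c p) {m \<in> supp p. \<phi> m = s}"
    by (rule alg_map_eq_sum[OF fin]) (auto simp: scal_def)
  also have "\<dots> = scal c (alg_map \<phi> p) s"
    using alg_map_eq_sum[OF fin, of p \<phi> s] by (simp add: scal_def sum_distrib_left)
  finally show "alg_map \<phi> (scal c p) s = scal c (alg_map \<phi> p) s" .
qed

lemma alg_map_diff:
  fixes p q :: "'x list \<Rightarrow> 'k::field"
  assumes "p \<in> fin_poly" "q \<in> fin_poly"
  shows "alg_map \<phi> (p - q) = alg_map \<phi> p - alg_map \<phi> q"
proof -
  have "p - q = p + scal (- 1) q"
    by (simp add: scal_def fun_eq_iff)
  moreover have "scal (- 1) q \<in> fin_poly"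
    using assms(2) by (rule scal.subspace_scale[OF subspace_fin_poly])
  ultimately have "alg_map \<phi> (p - q) = alg_map \<phi> p + scal (- 1) (alg_map \<phi> q)"
    using assms by (simp only: alg_map_add alg_map_scal)
  then show ?thesis
    by (simp add: scal_def fun_eq_iff)
qed

lemma alg_map_word_monom: "alg_map \<phi> (word_monom m) = sg_basis (\<phi> m)"
proof
  fix s
  have "alg_map \<phi> (word_monom m) s = sum (word_monom m) {m' \<in> {m}. \<phi> m' = s}"
    by (rule alg_map_eq_sum) (auto simp: word_monom_def)
  also have "{m' \<in> {m}. \<phi> m' = s} = (if \<phi> m = s then {m} else {})"
    by auto
  also have "sum (word_monom m) \<dots> = sg_basis (\<phi> m) s"
    by (simp add: word_monom_def sg_basis_def)
  finally show "alg_map \<phi> (word_monom m) s = sg_basis (\<phi> m) s" .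
qed

lemma alg_map_add_basis:
  fixes g :: "'x list \<Rightarrow> 'k::field"
  assumes g: "g \<in> fin_poly" and x: "x \<noteq> []"
  shows "alg_map \<phi> (g + scal c (sg_basis x)) = alg_map \<phi> g + scal c (sg_basis (\<phi> x))"
proof -
  have basis: "sg_basis x \<in> fin_poly"
    using word_monom_in_fin_poly[OF x] by (simp only: word_monom_eq_sg_basis)
  have "alg_map \<phi> (g + scal c (sg_basis x)) = alg_map \<phi> g + alg_map \<phi> (scal c (sg_basis x))"
    by (rule alg_map_add[OF g scal.subspace_scale[OF subspace_fin_poly basis]])
  also have "alg_map \<phi> (scal c (sg_basis x)) = scal c (sg_basis (\<phi> x))"
    by (simp only: alg_map_scal[OF basis] alg_map_word_monom[of \<phi> x, unfolded word_monom_eq_sg_basis])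
  finally show ?thesis .
qed

lemma sg_mult_alg_map_sg_basis:
  assumes p: "p \<in> fin_poly"
  shows "sg_mult (alg_map \<phi> p) (sg_basis t) s = sum p {u \<in> supp p. \<phi> u * t = s}"
proof -
  let ?a = "alg_map \<phi> p" and ?S = "{u \<in> supp p. \<phi> u * t = s}"
  have fin: "finite (supp p)" and fin_img: "finite (\<phi> ` supp p)"
    using p by (auto simp: fin_poly_def)
  have "sg_mult ?a (sg_basis t) s
      = (\<Sum>(x, y)\<in>{(x, y). x \<in> \<phi> ` supp p \<and> y \<in> {t} \<and> x * y = s}. ?a x * sg_basis t y)"
    by (rule sg_mult_eq_sum) (use fin_img supp_alg_map[of \<phi> p] in \<open>auto simp: sg_basis_def\<close>)
  also have "\<dots> = (\<Sum>x\<in>{x \<in> \<phi> ` supp p. x * t = s}. ?a x)"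
    by (rule sum.reindex_cong[where l = "\<lambda>x. (x, t)"]) (auto intro: inj_onI simp: sg_basis_def)
  also have "\<dots> = (\<Sum>x\<in>{x \<in> \<phi> ` supp p. x * t = s}. sum p {u \<in> ?S. \<phi> u = x})"
    by (intro sum.cong refl) (auto simp: alg_map_eq_sum[OF fin] intro!: sum.cong)
  also have "\<dots> = sum p ?S"
    by (rule sum.group) (use fin fin_img in auto)
  finally show ?thesis .
qed

section \<open>Presentations\<close>

definition relator_polys :: "('x list \<times> 'x list) set \<Rightarrow> ('x list \<Rightarrow> 'k::ring_1) set" where
  "relator_polys R = {word_monom l - word_monom r | l r. (l, r) \<in> R}"

locale semigroup_presentation =
  fixes R :: "('x list \<times> 'x list) set"
    and \<phi> :: "'x list \<Rightarrow> 's::semigroup_mult"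
  assumes relations_nonempty: "\<forall>(l, r)\<in>R. l \<noteq> [] \<and> r \<noteq> []"
    and hom: "\<forall>u v. u \<noteq> [] \<longrightarrow> v \<noteq> [] \<longrightarrow> \<phi> (u @ v) = \<phi> u * \<phi> v"
    and surj: "\<forall>s. \<exists>u. u \<noteq> [] \<and> \<phi> u = s"
    and ker: "\<forall>u v. u \<noteq> [] \<longrightarrow> v \<noteq> [] \<longrightarrow> (\<phi> u = \<phi> v \<longleftrightarrow> (u, v) \<in> cong_gen R)"
begin

lemma relator_polys_subset_fin_poly: "(relator_polys R :: ('x list \<Rightarrow> 'k::field) set) \<subseteq> fin_poly"
proof
  fix p :: "'x list \<Rightarrow> 'k"
  assume "p \<in> relator_polys R"
  then obtain l r where "p = word_monom l - word_monom r" "(l, r) \<in> R"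
    unfolding relator_polys_def by blast
  then show "p \<in> fin_poly"
    using relations_nonempty
    by (auto intro!: scal.subspace_diff[OF subspace_fin_poly] word_monom_in_fin_poly)
qed

lemma mixed_ideal_relators_subset_fin_poly:
  "(Q :: ('x list \<Rightarrow> 'k::field) set) \<subseteq> fin_poly \<Longrightarrow> mixed_ideal Q (relator_polys R) \<subseteq> fin_poly"
  using mixed_ideal_subset_fin_poly relator_polys_subset_fin_poly by blast

lemma alg_map_wrap_Nil:
  assumes p: "p \<in> fin_poly" and v: "v \<noteq> []"
  shows "alg_map \<phi> (wrap [] p v) = sg_mult (alg_map \<phi> p) (sg_basis (\<phi> v))"
proof
  fix s
  have fin: "finite (supp p)" and "p [] = 0"
    using p by (auto simp: fin_poly_def)
  have \<phi>_append: "\<phi> (u @ v) = \<phi> u * \<phi> v" if "u \<in> supp p" for u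
  proof -
    have "u \<noteq> []"
      using that \<open>p [] = 0\<close> by auto
    then show ?thesis
      using hom v by blast
  qed
  have "alg_map \<phi> (wrap [] p v) s = sum (wrap [] p v) {m \<in> (\<lambda>u. u @ v) ` supp p. \<phi> m = s}"
    by (rule alg_map_eq_sum) (use fin supp_wrap[of "[]" p v] in auto)
  also have "{m \<in> (\<lambda>u. u @ v) ` supp p. \<phi> m = s} = (\<lambda>u. u @ v) ` {u \<in> supp p. \<phi> (u @ v) = s}"
    by auto
  also have "sum (wrap [] p v) \<dots> = sum (\<lambda>u. wrap [] p v (u @ v)) {u \<in> supp p. \<phi> (u @ v) = s}"
    by (subst sum.reindex) (auto intro: inj_onI simp: comp_def)
  also have "\<dots> = sum p {u \<in> supp p. \<phi> u * \<phi> v = s}"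
    using \<phi>_append by (auto intro!: sum.cong)
  also have "\<dots> = sg_mult (alg_map \<phi> p) (sg_basis (\<phi> v)) s"
    by (rule sg_mult_alg_map_sg_basis[OF p, symmetric])
  finally show "alg_map \<phi> (wrap [] p v) s = sg_mult (alg_map \<phi> p) (sg_basis (\<phi> v)) s" .
qed

lemma cong_gen_diff_in_mixed_ideal:
  assumes "(u, v) \<in> cong_gen R"
  shows "(word_monom u - word_monom v :: 'x list \<Rightarrow> 'k::field) \<in> mixed_ideal {} (relator_polys R)"
proof (rule conversion_diff_in_subspace[OF scal.subspace_span _ assms[unfolded cong_gen_def]])
  fix y z
  assume "(y, z) \<in> cong_step R"
  then obtain w l r v where yz: "y = w @ l @ v" "z = w @ r @ v" and lr: "(l, r) \<in> R"
    unfolding cong_step_def by blast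
  have "(word_monom l - word_monom r :: 'x list \<Rightarrow> 'k) \<in> relator_polys R"
    using lr unfolding relator_polys_def by blast
  moreover have "word_monom y - word_monom z = wrap w (word_monom l - word_monom r :: 'x list \<Rightarrow> 'k) v"
    unfolding yz module_hom.diff[OF module_hom_wrap] wrap_word_monom ..
  ultimately have "word_monom y - word_monom z \<in> mixed_gens {} (relator_polys R :: ('x list \<Rightarrow> 'k) set)"
    unfolding mixed_gens_iff by blast
  then show "word_monom y - word_monom z \<in> mixed_ideal {} (relator_polys R :: ('x list \<Rightarrow> 'k) set)"
    by (rule scal.span_base)
qed

lemma alg_map_mixed_gen:
  fixes Q :: "('x list \<Rightarrow> 'k::field) set"
  assumes Q: "Q \<subseteq> fin_poly" and b: "b \<in> mixed_gens Q (relator_polys R)"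
  shows "alg_map \<phi> b \<in> right_ideal (alg_map \<phi> ` Q)"
proof -
  obtain w p v where b_eq: "b = wrap w p v" and p: "p \<in> Q \<and> w = [] \<or> p \<in> relator_polys R"
    using b unfolding mixed_gens_iff by blast
  from p show ?thesis
  proof
    assume pQ: "p \<in> Q \<and> w = []"
    then have gen: "alg_map \<phi> p \<in> right_ideal (alg_map \<phi> ` Q)"
      by (simp add: right_ideal.gen)
    show ?thesis
    proof (cases "v = []")
      case True
      then show ?thesis
        using gen pQ b_eq by simp
    next
      case False
      have "sg_mult (alg_map \<phi> p) (sg_basis (\<phi> v)) \<in> right_ideal (alg_map \<phi> ` Q)"
        using gen sg_basis_in_sg_alg by (rule right_ideal.rmult)
      moreover have "p \<in> fin_poly"
        using pQ Q by blast
      ultimately show ?thesis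
        using alg_map_wrap_Nil[OF _ False] pQ b_eq by metis
    qed
  next
    assume "p \<in> relator_polys R"
    then obtain l r where p_eq: "p = word_monom l - word_monom r" and lr: "(l, r) \<in> R"
      unfolding relator_polys_def by blast
    then have "(w @ l @ v, w @ r @ v) \<in> cong_gen R"
      unfolding cong_gen_def cong_step_def by blast
    moreover have "l \<noteq> []" "r \<noteq> []"
      using lr relations_nonempty by auto
    ultimately have "\<phi> (w @ l @ v) = \<phi> (w @ r @ v)"
      using ker by simp
    moreover have "alg_map \<phi> b = alg_map \<phi> (word_monom (w @ l @ v)) - alg_map \<phi> (word_monom (w @ r @ v))"
      using \<open>l \<noteq> []\<close> \<open>r \<noteq> []\<close>
      unfolding b_eq p_eq module_hom.diff[OF module_hom_wrap] wrap_word_monom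
      by (intro alg_map_diff word_monom_in_fin_poly) simp_all
    ultimately have "alg_map \<phi> b = 0"
      by (simp add: alg_map_word_monom)
    then show ?thesis
      by (simp add: right_ideal.zero)
  qed
qed

lemma alg_map_mixed_ideal:
  fixes Q :: "('x list \<Rightarrow> 'k::field) set"
  assumes Q: "Q \<subseteq> fin_poly" and l: "l \<in> mixed_ideal Q (relator_polys R)"
  shows "alg_map \<phi> l \<in> right_ideal (alg_map \<phi> ` Q)"
proof -
  from l have "l \<in> fin_poly \<and> alg_map \<phi> l \<in> right_ideal (alg_map \<phi> ` Q)"
  proof (induction rule: scal.span_induct_alt)
    case base
    show ?case
      unfolding alg_map_zero using scal.subspace_0[OF subspace_fin_poly] right_ideal.zero by blast
  next
    case (step c b y)
    have b: "b \<in> fin_poly" "scal c b \<in> fin_poly"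
      using step.hyps mixed_ideal_relators_subset_fin_poly[OF Q] scal.span_base
        scal.subspace_scale[OF subspace_fin_poly] by blast+
    have "alg_map \<phi> (scal c b + y) = scal c (alg_map \<phi> b) + alg_map \<phi> y"
      using b step.IH by (simp add: alg_map_add alg_map_scal)
    moreover have "scal c (alg_map \<phi> b) \<in> right_ideal (alg_map \<phi> ` Q)"
      using alg_map_mixed_gen[OF Q step.hyps] by (rule right_ideal.smult)
    ultimately show ?case
      using b step.IH scal.subspace_add[OF subspace_fin_poly] right_ideal.add by metis
  qed
  then show ?thesis ..
qed

lemma sg_mult_alg_map_in_image:
  fixes Q :: "('x list \<Rightarrow> 'k::field) set"
  assumes Q: "Q \<subseteq> fin_poly" and l: "l \<in> mixed_ideal Q (relator_polys R)" and b: "b \<in> sg_alg"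
  shows "sg_mult (alg_map \<phi> l) b \<in> alg_map \<phi> ` mixed_ideal Q (relator_polys R)"
proof -
  have l_fin: "l \<in> fin_poly"
    using l mixed_ideal_relators_subset_fin_poly[OF Q] by blast
  have "finite (supp b)"
    using b by (simp add: sg_alg_def)
  then show ?thesis
  proof (induction rule: finite_support_induct)
    case zero
    have "sg_mult (alg_map \<phi> l) 0 = alg_map \<phi> 0"
      by (simp only: sg_mult_zero_right alg_map_zero)
    then show ?case
      by (metis image_eqI scal.span_zero)
  next
    case (add g x)
    from add.IH obtain l1 where l1: "l1 \<in> mixed_ideal Q (relator_polys R)"
      "sg_mult (alg_map \<phi> l) g = alg_map \<phi> l1"
      by blast
    obtain u where u: "u \<noteq> []" "\<phi> u = x"
      using surj by blast
    let ?l' = "l1 + scal (b x) (wrap [] l u)"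
    have g: "g \<in> sg_alg"
      using add.hyps(1) \<open>finite (supp b)\<close> finite_subset by (auto simp: sg_alg_def)
    have wrap_l: "wrap [] l u \<in> mixed_ideal Q (relator_polys R)" "wrap [] l u \<in> fin_poly"
      using wrap_Nil_in_mixed_ideal[OF l] wrap_in_fin_poly[OF l_fin] .
    have l1_fin: "l1 \<in> fin_poly"
      using l1(1) mixed_ideal_relators_subset_fin_poly[OF Q] by blast
    have "sg_mult (alg_map \<phi> l) (g + scal (b x) (sg_basis x))
        = sg_mult (alg_map \<phi> l) g + scal (b x) (sg_mult (alg_map \<phi> l) (sg_basis x))"
      by (rule sg_mult_add_basis_right[OF alg_map_in_sg_alg[OF l_fin] g])
    also have "sg_mult (alg_map \<phi> l) (sg_basis x) = alg_map \<phi> (wrap [] l u)"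
      using alg_map_wrap_Nil[OF l_fin u(1)] u(2) by simp
    also have "sg_mult (alg_map \<phi> l) g = alg_map \<phi> l1"
      by (rule l1(2))
    also have "alg_map \<phi> l1 + scal (b x) (alg_map \<phi> (wrap [] l u)) = alg_map \<phi> ?l'"
      by (simp only: alg_map_add[OF l1_fin scal.subspace_scale[OF subspace_fin_poly wrap_l(2)]]
          alg_map_scal[OF wrap_l(2)])
    finally show ?case
      using l1(1) wrap_l(1) by (blast intro: scal.span_add scal.span_scale)
  qed
qed

lemma right_ideal_subset_alg_map_image:
  fixes Q :: "('x list \<Rightarrow> 'k::field) set"
  assumes Q: "Q \<subseteq> fin_poly" and a: "a \<in> right_ideal (alg_map \<phi> ` Q)"
  shows "a \<in> alg_map \<phi> ` mixed_ideal Q (relator_polys R)"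
  using a
proof (induction rule: right_ideal.induct)
  case (gen g)
  then obtain q where q: "q \<in> Q" "g = alg_map \<phi> q"
    by blast
  then have "q \<in> mixed_gens Q (relator_polys R)"
    unfolding mixed_gens_iff by (metis wrap_Nil_Nil)
  then show ?case
    using q(2) scal.span_base by blast
next
  case zero
  show ?case
    using scal.span_zero alg_map_zero by (metis image_eqI)
next
  case (add a b)
  then obtain la lb where "la \<in> mixed_ideal Q (relator_polys R)" "a = alg_map \<phi> la"
    "lb \<in> mixed_ideal Q (relator_polys R)" "b = alg_map \<phi> lb"
    by blast
  moreover have "la \<in> fin_poly" "lb \<in> fin_poly"
    using calculation mixed_ideal_relators_subset_fin_poly[OF Q] by blast+
  ultimately show ?case
    by (metis alg_map_add image_eqI scal.span_add)
next
  case (smult a c)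
  then obtain la where "la \<in> mixed_ideal Q (relator_polys R)" "a = alg_map \<phi> la"
    by blast
  moreover have "la \<in> fin_poly"
    using calculation mixed_ideal_relators_subset_fin_poly[OF Q] by blast
  ultimately show ?case
    by (metis alg_map_scal image_eqI scal.span_scale)
next
  case (rmult a b)
  then show ?case
    using sg_mult_alg_map_in_image[OF Q] by blast
qed

definition rep :: "'s \<Rightarrow> 'x list" where
  "rep s = (SOME u. u \<noteq> [] \<and> \<phi> u = s)"

lemma rep_nonempty: "rep s \<noteq> []" and \<phi>_rep: "\<phi> (rep s) = s"
  using someI_ex[of "\<lambda>u. u \<noteq> [] \<and> \<phi> u = s"] surj unfolding rep_def by blast+

definition lift :: "('s \<Rightarrow> 'k) \<Rightarrow> 'x list \<Rightarrow> 'k::zero" where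
  "lift a = (\<lambda>m. if m \<noteq> [] \<and> rep (\<phi> m) = m then a (\<phi> m) else 0)"

lemma lift_add: "lift (a + b) = lift a + lift (b :: 's \<Rightarrow> 'k::comm_ring_1)"
  by (simp add: lift_def fun_eq_iff)

lemma lift_scal: "lift (scal c a) = scal c (lift (a :: 's \<Rightarrow> 'k::comm_ring_1))"
  by (simp add: lift_def scal_def fun_eq_iff)

lemma lift_zero: "lift 0 = 0"
  by (simp add: lift_def fun_eq_iff)

lemma lift_rep: "lift a (rep s) = a s"
  by (simp add: lift_def rep_nonempty \<phi>_rep)

lemma lift_sg_basis: "lift (sg_basis s) = word_monom (rep s)"
  by (auto simp: lift_def sg_basis_def word_monom_def fun_eq_iff rep_nonempty \<phi>_rep)

lemma supp_lift: "supp (lift a) \<subseteq> rep ` supp a"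
proof
  fix m
  assume "m \<in> supp (lift a)"
  then have "m = rep (\<phi> m)" "\<phi> m \<in> supp a"
    by (auto simp: lift_def split: if_splits)
  then show "m \<in> rep ` supp a"
    by (rule image_eqI)
qed

lemma lift_in_fin_poly:
  assumes "a \<in> sg_alg"
  shows "lift a \<in> fin_poly"
proof -
  have "finite (supp (lift a))"
    by (rule finite_subset[OF supp_lift]) (use assms in \<open>simp add: sg_alg_def\<close>)
  moreover have "lift a [] = 0"
    by (simp add: lift_def)
  ultimately show ?thesis
    by (simp add: fin_poly_def)
qed

lemma alg_map_lift:
  assumes a: "a \<in> sg_alg"
  shows "alg_map \<phi> (lift a) = a"
proof
  fix s
  have "alg_map \<phi> (lift a) s = sum (lift a) {m \<in> rep ` supp a. \<phi> m = s}"
    by (rule alg_map_eq_sum) (use a supp_lift in \<open>auto simp: sg_alg_def\<close>)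
  also have "{m \<in> rep ` supp a. \<phi> m = s} = (if a s = 0 then {} else {rep s})"
    by (auto simp: \<phi>_rep)
  also have "sum (lift a) \<dots> = a s"
    by (simp add: lift_rep)
  finally show "alg_map \<phi> (lift a) s = a s" .
qed

lemma alg_map_image_fin_poly: "alg_map \<phi> ` fin_poly = (sg_alg :: ('s \<Rightarrow> 'k::field) set)"
proof
  show "alg_map \<phi> ` fin_poly \<subseteq> (sg_alg :: ('s \<Rightarrow> 'k) set)"
    using alg_map_in_sg_alg by blast
  show "(sg_alg :: ('s \<Rightarrow> 'k) set) \<subseteq> alg_map \<phi> ` fin_poly"
    using alg_map_lift lift_in_fin_poly by (metis image_eqI subsetI)
qed

text \<open>Every word is congruent to the chosen representative of its image.\<close>

lemma diff_lift_alg_map_in_mixed_ideal: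
  assumes f: "(f :: 'x list \<Rightarrow> 'k::field) \<in> fin_poly"
  shows "f - lift (alg_map \<phi> f) \<in> mixed_ideal {} (relator_polys R)"
proof -
  have fin: "finite (supp f)" and "f [] = 0"
    using f by (auto simp: fin_poly_def)
  from fin show ?thesis
  proof (induction rule: finite_support_induct)
    case zero
    show ?case
      by (simp only: alg_map_zero lift_zero diff_self scal.span_zero)
  next
    case (add g x)
    have "x \<noteq> []"
      using add.hyps(2) \<open>f [] = 0\<close> by auto
    have g: "g \<in> fin_poly"
      using finite_subset[OF add.hyps(1) fin] add.hyps(1) \<open>f [] = 0\<close> by (auto simp: fin_poly_def)
    have lift_eq: "lift (alg_map \<phi> (g + scal (f x) (sg_basis x)))
        = lift (alg_map \<phi> g) + scal (f x) (sg_basis (rep (\<phi> x)))"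
      by (simp only: alg_map_add_basis[OF g \<open>x \<noteq> []\<close>] lift_add lift_scal lift_sg_basis
          word_monom_eq_sg_basis)
    have "(x, rep (\<phi> x)) \<in> cong_gen R"
      using ker \<open>x \<noteq> []\<close> rep_nonempty \<phi>_rep by metis
    then have "word_monom x - word_monom (rep (\<phi> x)) \<in> mixed_ideal {} (relator_polys R :: ('x list \<Rightarrow> 'k) set)"
      by (rule cong_gen_diff_in_mixed_ideal)
    then have "(g - lift (alg_map \<phi> g)) + scal (f x) (sg_basis x - sg_basis (rep (\<phi> x)))
        \<in> mixed_ideal {} (relator_polys R)"
      using add.IH unfolding word_monom_eq_sg_basis by (intro scal.span_add scal.span_scale)
    moreover have "(g + scal (f x) (sg_basis x)) - lift (alg_map \<phi> (g + scal (f x) (sg_basis x)))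
        = (g - lift (alg_map \<phi> g)) + scal (f x) (sg_basis x - sg_basis (rep (\<phi> x)))"
      unfolding lift_eq by (simp add: scal_def fun_eq_iff algebra_simps)
    ultimately show ?case
      by (simp only:)
  qed
qed

lemma mixed_ideal_iff_alg_map:
  fixes Q :: "('x list \<Rightarrow> 'k::field) set"
  assumes Q: "Q \<subseteq> fin_poly" and d: "d \<in> fin_poly"
  shows "d \<in> mixed_ideal Q (relator_polys R) \<longleftrightarrow> alg_map \<phi> d \<in> right_ideal (alg_map \<phi> ` Q)"
proof
  show "d \<in> mixed_ideal Q (relator_polys R) \<Longrightarrow> alg_map \<phi> d \<in> right_ideal (alg_map \<phi> ` Q)"
    by (rule alg_map_mixed_ideal[OF Q])
next
  assume "alg_map \<phi> d \<in> right_ideal (alg_map \<phi> ` Q)"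
  then obtain l where l: "l \<in> mixed_ideal Q (relator_polys R)" "alg_map \<phi> d = alg_map \<phi> l"
    using right_ideal_subset_alg_map_image[OF Q] by blast
  have "l \<in> fin_poly"
    using l(1) mixed_ideal_relators_subset_fin_poly[OF Q] by blast
  then have "d - l \<in> fin_poly" and "alg_map \<phi> (d - l) = 0"
    using d l(2) by (simp_all add: alg_map_diff scal.subspace_diff[OF subspace_fin_poly])
  then have "d - l \<in> mixed_ideal {} (relator_polys R)"
    using diff_lift_alg_map_in_mixed_ideal[of "d - l"] by (simp add: lift_zero)
  then have "(d - l) + l \<in> mixed_ideal Q (relator_polys R)"
    using mixed_ideal_mono[of "{}" Q] l(1) by (blast intro: scal.span_add)
  then show "d \<in> mixed_ideal Q (relator_polys R)"
    by simp
qed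

lemma red_equiv_eq_pullback:
  fixes Q :: "('x list \<Rightarrow> 'k::field) set"
  assumes gt: "semigroup_wellorder gt" and Q: "Q \<subseteq> fin_poly"
  shows "red_equiv gt Q (relator_polys R) = {(f, g). f \<in> fin_poly \<and> g \<in> fin_poly \<and>
     (alg_map \<phi> f, alg_map \<phi> g) \<in> {(a, b). a \<in> sg_alg \<and> b \<in> sg_alg \<and>
       a - b \<in> right_ideal (alg_map \<phi> ` Q)}}"
proof -
  have "f - g \<in> mixed_ideal Q (relator_polys R) \<longleftrightarrow>
      alg_map \<phi> f - alg_map \<phi> g \<in> right_ideal (alg_map \<phi> ` Q)"
    if fg: "f \<in> fin_poly" "g \<in> fin_poly" for f g
    using mixed_ideal_iff_alg_map[OF Q scal.subspace_diff[OF subspace_fin_poly fg]] fg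
    by (simp add: alg_map_diff)
  then show ?thesis
    using red_equiv_eq_mixed_ideal[OF gt Q relator_polys_subset_fin_poly] alg_map_in_sg_alg
    by auto
qed

end

theorem corollary3p5:
  fixes gt :: "'x list \<Rightarrow> 'x list \<Rightarrow> bool"
    and R :: "('x list \<times> 'x list) set"
    and \<phi> :: "'x list \<Rightarrow> 's::semigroup_mult"
    and Q :: "('x list \<Rightarrow> 'k::field) set"
  assumes gt: "semigroup_wellorder gt"
    and R_ne: "\<forall>(l, r)\<in>R. l \<noteq> [] \<and> r \<noteq> []"
    and hom: "\<forall>u v. u \<noteq> [] \<longrightarrow> v \<noteq> [] \<longrightarrow> \<phi> (u @ v) = \<phi> u * \<phi> v"
    and surj: "\<forall>s. \<exists>u. u \<noteq> [] \<and> \<phi> u = s"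
    and ker: "\<forall>u v. u \<noteq> [] \<longrightarrow> v \<noteq> [] \<longrightarrow> (\<phi> u = \<phi> v \<longleftrightarrow> (u, v) \<in> cong_gen R)"
    and Q: "Q \<subseteq> fin_poly"
  shows "\<exists>h. bij_betw h
     (sg_alg // {(a, b). a \<in> sg_alg \<and> b \<in> sg_alg \<and>
                  a - b \<in> right_ideal (alg_map \<phi> ` Q)})
     (fin_poly // red_equiv gt Q {word_monom l - word_monom r | l r. (l, r) \<in> R})"
proof -
  interpret semigroup_presentation R \<phi>
    using R_ne hom surj ker by unfold_locales
  show ?thesis
    using bij_betw_quotient_pullback[OF alg_map_image_fin_poly _ red_equiv_eq_pullback[OF gt Q]]
    unfolding relator_polys_def by blast
qed

end
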